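(* Let $k\ge1$. Let $(G_1,\dots,G_k)$ be distributed according to $\gamma_k$, $U$ uniform on $\{0,1,\dots,k\}$, and $\tau$ a uniform random permutation of $\{0,1,\dots,k\}$, all independent. Let $(I_1,\dots,I_{k+1})\sim\mu_{k+1}$ and $U'$ uniform on $\{1,\dots,k+1\}$ independent of it, and set $J=(I_i-I_{U'})_{1\le i\le k+1}$. Then $(\bar G_{\tau(i)}-\bar G_U)_{0\le i\le k}\overset{(d)}{=}J$, where $\bar G_0=0$ and $\bar G_i=G_1+\dots+G_i$.
   Context: Let $B_1,B_2,\dots$ be i.i.d. two-sided standard Brownian motions and $I^{(n)}=B_n\circ\cdots\circ B_1$. It is known that for any $m\ge1$ and distinct nonzero reals $t_1,\dots,t_m$, $(I^{(n)}(t_1),\dots,I^{(n)}(t_m))$ converges in distribution to a law $\mu_m$ independent of the $t_i$'s (hence exchangeable), and that for $(I_1,\dots,I_m)\sim\mu_m$, $(I_2-I_1,\dots,I_m-I_1)\sim\mu_{m-1}$. For a sequence $\ell_0,\dots,\ell_k$ with increasing rearrangement $\hat\ell_0\le\dots\le\hat\ell_k$, its gaps sequence is $(\hat\ell_i-\hat\ell_{i-1})_{1\le i\le k}$. $\gamma_k$ is the law of the gaps sequence of a $\mu_{k+1}$-distributed vector. *)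

theory Defs
  imports "HOL-Probability.Probability"
begin

definition two_sided_BM :: "'a measure \<Rightarrow> ('a \<Rightarrow> real \<Rightarrow> real) \<Rightarrow> bool" where
  "two_sided_BM M X \<longleftrightarrow>
     (\<forall>t. (\<lambda>\<omega>. X \<omega> t) \<in> borel_measurable M) \<and>
     (\<forall>\<omega>\<in>space M. X \<omega> 0 = 0 \<and> continuous_on UNIV (X \<omega>)) \<and>
     (\<forall>s t. s < t \<longrightarrow>
        distributed M lborel (\<lambda>\<omega>. X \<omega> t - X \<omega> s)
          (\<lambda>x. ennreal (normal_density 0 (sqrt (t - s)) x))) \<and>
     (\<forall>ts :: real list. sorted_wrt (<) ts \<longrightarrow>
        prob_space.indep_vars M (\<lambda>_. borel)
          (\<lambda>i \<omega>. X \<omega> (ts ! Suc i) - X \<omega> (ts ! i)) {..<length ts - 1})"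

definition iid_two_sided_BMs :: "'a measure \<Rightarrow> (nat \<Rightarrow> 'a \<Rightarrow> real \<Rightarrow> real) \<Rightarrow> bool" where
  "iid_two_sided_BMs M B \<longleftrightarrow>
     prob_space M \<and> (\<forall>n. two_sided_BM M (B n)) \<and>
     prob_space.indep_vars M (\<lambda>_. Pi\<^sub>M (UNIV :: real set) (\<lambda>_. borel)) B UNIV"

fun iter_BM :: "(nat \<Rightarrow> 'a \<Rightarrow> real \<Rightarrow> real) \<Rightarrow> nat \<Rightarrow> 'a \<Rightarrow> real \<Rightarrow> real" where
  "iter_BM B 0 \<omega> = id"
| "iter_BM B (Suc n) \<omega> = B n \<omega> \<circ> iter_BM B n \<omega>"

definition conv_in_distr ::
  "nat \<Rightarrow> (nat \<Rightarrow> (nat \<Rightarrow> real) measure) \<Rightarrow> (nat \<Rightarrow> real) measure \<Rightarrow> bool" where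
  "conv_in_distr m P Q \<longleftrightarrow>
     (\<forall>f :: (nat \<Rightarrow> real) \<Rightarrow> real.
        continuous_on (PiE {..<m} (\<lambda>_. UNIV)) f \<longrightarrow>
        bounded (f ` PiE {..<m} (\<lambda>_. UNIV)) \<longrightarrow>
        (\<lambda>n. \<integral>x. f x \<partial>P n) \<longlonglongrightarrow> (\<integral>x. f x \<partial>Q))"

text \<open>mu is the law mu_m: for all distinct nonzero t_1..t_m (here indexed 0..m-1),
  the law of (I^(n)(t_i))_i converges in distribution to mu.\<close>
definition is_mu :: "'a measure \<Rightarrow> (nat \<Rightarrow> 'a \<Rightarrow> real \<Rightarrow> real) \<Rightarrow> nat \<Rightarrow> (nat \<Rightarrow> real) measure \<Rightarrow> bool" where
  "is_mu M B m \<mu> \<longleftrightarrow>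
     sets \<mu> = sets (Pi\<^sub>M {..<m} (\<lambda>_. borel)) \<and> prob_space \<mu> \<and>
     (\<forall>t :: nat \<Rightarrow> real. inj_on t {..<m} \<and> (\<forall>i<m. t i \<noteq> 0) \<longrightarrow>
        conv_in_distr m
          (\<lambda>n. distr M (Pi\<^sub>M {..<m} (\<lambda>_. borel)) (\<lambda>\<omega>. \<lambda>i\<in>{..<m}. iter_BM B n \<omega> (t i)))
          \<mu>)"

definition sorted_rearr :: "nat \<Rightarrow> (nat \<Rightarrow> real) \<Rightarrow> nat \<Rightarrow> real" where
  "sorted_rearr k l i = sort (map l [0..<Suc k]) ! i"

definition gaps :: "nat \<Rightarrow> (nat \<Rightarrow> real) \<Rightarrow> nat \<Rightarrow> real" where
  "gaps k l = (\<lambda>i\<in>{1..k}. sorted_rearr k l i - sorted_rearr k l (i - 1))"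

definition gamma :: "nat \<Rightarrow> (nat \<Rightarrow> real) measure \<Rightarrow> (nat \<Rightarrow> real) measure" where
  "gamma k \<mu> = distr \<mu> (Pi\<^sub>M {1..k} (\<lambda>_. borel)) (gaps k)"

definition Gbar :: "(nat \<Rightarrow> real) \<Rightarrow> nat \<Rightarrow> real" where
  "Gbar g i = (\<Sum>j=1..i. g j)"

end

theory Submission
  imports Defs
begin

text \<open>
  The law \<open>\<mu>\<close> is exchangeable: evaluating the iterated Brownian motion at permuted times permutes
  the coordinates of the vector, and both laws converge to \<open>\<mu>\<close>; continuous approximations of
  orthant indicators then identify the permuted law with \<open>\<mu>\<close>. Hence \<open>x \<sim> \<mu>\<close> may be replaced by
  \<open>x \<circ> \<pi>\<close> for an independent uniform permutation \<open>\<pi>\<close>. For fixed \<open>x\<close>, write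
  \<open>x j = min x + Gbar (gaps x) (\<sigma> j)\<close> with \<open>\<sigma>\<close> the ranking permutation; then
  \<open>(\<pi>, u) \<mapsto> (\<sigma> (\<pi> u), \<sigma> \<circ> \<pi>)\<close> is a bijection of uniform laws carrying
  \<open>(x (\<pi> i) - x (\<pi> u))\<^sub>i\<close> to \<open>(Gbar (gaps x) (\<tau> i) - Gbar (gaps x) u')\<^sub>i\<close>.
  Integrating over \<open>x\<close>, whose gaps are \<open>\<gamma>\<^sub>k\<close>-distributed, gives the claim.
\<close>

lemma sorted_rearr_permutes:
  obtains p where "p permutes {..k}" "\<And>i. i \<le> k \<Longrightarrow> sorted_rearr k x i = x (p i)"
proof -
  let ?xs = "map x [0..<Suc k]"
  obtain p where p: "p permutes {..<length ?xs}" "permute_list p ?xs = sort ?xs"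
    using mset_eq_permutation[of "sort ?xs" ?xs] by auto
  then have "p permutes {..k}"
    by (simp add: lessThan_Suc_atMost)
  moreover have "sorted_rearr k x i = x (p i)" if "i \<le> k" for i
  proof -
    have "sorted_rearr k x i = permute_list p ?xs ! i"
      using p(2) by (simp add: sorted_rearr_def)
    also have "\<dots> = x (p i)"
      using p(1) that permutes_in_image[OF \<open>p permutes {..k}\<close>, of i]
      by (simp add: permute_list_nth del: upt_Suc)
    finally show ?thesis .
  qed
  ultimately show thesis
    using that by blast
qed

lemma sorted_rearr_eq_of_sorted:
  assumes p: "p permutes {..k}" and sorted: "\<And>j. j < k \<Longrightarrow> x (p j) \<le> x (p (Suc j))"
    and "i \<le> k"
  shows "sorted_rearr k x i = x (p i)"
proof -
  let ?xs = "map x [0..<Suc k]"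
  have p': "p permutes {..<length ?xs}"
    using p by (simp add: lessThan_Suc_atMost)
  have nth: "permute_list p ?xs ! j = x (p j)" if "j \<le> k" for j
    using p' that permutes_in_image[OF p, of j]
    by (simp add: permute_list_nth del: upt_Suc)
  have "sort ?xs = permute_list p ?xs"
    by (rule properties_for_sort)
      (use p' nth sorted in \<open>auto simp: mset_permute_list sorted_iff_nth_Suc\<close>)
  then show ?thesis
    using nth[OF \<open>i \<le> k\<close>] by (simp add: sorted_rearr_def)
qed

lemma sorted_rearr_mono: "i \<le> j \<Longrightarrow> j \<le> k \<Longrightarrow> sorted_rearr k x i \<le> sorted_rearr k x j"
  unfolding sorted_rearr_def by (intro sorted_nth_mono) auto

lemma sorted_rearr_eq_Gbar_gaps:
  "i \<le> k \<Longrightarrow> sorted_rearr k x i = sorted_rearr k x 0 + Gbar (gaps k x) i"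
  by (induction i) (auto simp: Gbar_def gaps_def)

lemma Gbar_gaps_permutes:
  obtains \<sigma> where "\<sigma> permutes {..k}"
    "\<And>j. j \<le> k \<Longrightarrow> x j = sorted_rearr k x 0 + Gbar (gaps k x) (\<sigma> j)"
proof -
  obtain p where p: "p permutes {..k}" "\<And>i. i \<le> k \<Longrightarrow> sorted_rearr k x i = x (p i)"
    using sorted_rearr_permutes[of k x] by blast
  have "x j = sorted_rearr k x 0 + Gbar (gaps k x) (inv p j)" if "j \<le> k" for j
    using p sorted_rearr_eq_Gbar_gaps[of "inv p j" k x] that
      permutes_in_image[OF permutes_inv[OF p(1)], of j]
    by (simp add: permutes_inverses(1)[OF p(1)])
  then show thesis
    using that permutes_inv[OF p(1)] by blast
qed

lemma pair_pmf_of_set: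
  assumes "finite A" "A \<noteq> {}" "finite B" "B \<noteq> {}"
  shows "pair_pmf (pmf_of_set A) (pmf_of_set B) = pmf_of_set (A \<times> B)"
proof (rule pmf_eqI)
  fix ab :: "'a \<times> 'b"
  show "pmf (pair_pmf (pmf_of_set A) (pmf_of_set B)) ab = pmf (pmf_of_set (A \<times> B)) ab"
    using assms by (cases ab) (simp add: pmf_pair card_cartesian_product split: split_indicator)
qed

lemma bij_betw_permutes_relabel:
  assumes \<sigma>: "\<sigma> permutes A"
  shows "bij_betw (\<lambda>(\<pi>, u). (\<sigma> (\<pi> u), \<sigma> \<circ> \<pi>)) ({p. p permutes A} \<times> A) (A \<times> {p. p permutes A})"
proof (rule bij_betw_byWitness[where f'="\<lambda>(v, \<tau>). (inv \<sigma> \<circ> \<tau>, inv \<tau> v)"])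
  show "\<forall>w\<in>{p. p permutes A} \<times> A. (\<lambda>(v, \<tau>). (inv \<sigma> \<circ> \<tau>, inv \<tau> v)) ((\<lambda>(\<pi>, u). (\<sigma> (\<pi> u), \<sigma> \<circ> \<pi>)) w) = w"
    using \<sigma> by (auto simp: fun_eq_iff o_inv_distrib permutes_bij permutes_inverses)
  show "\<forall>w\<in>A \<times> {p. p permutes A}. (\<lambda>(\<pi>, u). (\<sigma> (\<pi> u), \<sigma> \<circ> \<pi>)) ((\<lambda>(v, \<tau>). (inv \<sigma> \<circ> \<tau>, inv \<tau> v)) w) = w"
    using \<sigma> by (auto simp: fun_eq_iff permutes_inverses)
  show "(\<lambda>(\<pi>, u). (\<sigma> (\<pi> u), \<sigma> \<circ> \<pi>)) ` ({p. p permutes A} \<times> A) \<subseteq> A \<times> {p. p permutes A}"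
    using \<sigma> by (auto simp: permutes_compose permutes_in_image)
  show "(\<lambda>(v, \<tau>). (inv \<sigma> \<circ> \<tau>, inv \<tau> v)) ` (A \<times> {p. p permutes A}) \<subseteq> {p. p permutes A} \<times> A"
    using \<sigma> by (auto simp: permutes_compose permutes_inv permutes_in_image)
qed

lemma map_pmf_recentred_shuffle_eq_Gbar_gaps:
  fixes x :: "nat \<Rightarrow> real" and k :: nat
  defines "S \<equiv> {p. p permutes {..k}}"
  shows "map_pmf (\<lambda>(\<pi>, u). \<lambda>i\<in>{..k}. x (\<pi> i) - x (\<pi> u)) (pair_pmf (pmf_of_set S) (pmf_of_set {..k}))
       = map_pmf (\<lambda>(u, \<tau>). \<lambda>i\<in>{..k}. Gbar (gaps k x) (\<tau> i) - Gbar (gaps k x) u)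
           (pair_pmf (pmf_of_set {..k}) (pmf_of_set S))"
    (is "map_pmf ?H _ = map_pmf ?F _")
proof -
  obtain \<sigma> where \<sigma>: "\<sigma> permutes {..k}"
    and x_eq: "\<And>j. j \<le> k \<Longrightarrow> x j = sorted_rearr k x 0 + Gbar (gaps k x) (\<sigma> j)"
    using Gbar_gaps_permutes[of k x] by blast
  define \<beta> where "\<beta> = (\<lambda>(\<pi> :: nat \<Rightarrow> nat, u). (\<sigma> (\<pi> u), \<sigma> \<circ> \<pi>))"
  have S: "finite S" "S \<noteq> {}"
    unfolding S_def using finite_permutations[of "{..k}"] permutes_id[of "{..k}"] by blast+
  have \<beta>: "bij_betw \<beta> (S \<times> {..k}) ({..k} \<times> S)"
    unfolding \<beta>_def S_def by (rule bij_betw_permutes_relabel[OF \<sigma>])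
  have perm_le: "\<pi> i \<le> k" if "\<pi> permutes {..k}" "i \<le> k" for \<pi> i
    using permutes_in_image[OF that(1)] that(2) by simp
  have H_eq: "?H w = ?F (\<beta> w)" if "w \<in> S \<times> {..k}" for w
    using that x_eq perm_le by (auto simp: \<beta>_def S_def intro!: restrict_ext)
  have pairs: "pair_pmf (pmf_of_set S) (pmf_of_set {..k}) = pmf_of_set (S \<times> {..k})"
    "pair_pmf (pmf_of_set {..k}) (pmf_of_set S) = pmf_of_set ({..k} \<times> S)"
    using S by (simp_all add: pair_pmf_of_set)
  have "map_pmf ?H (pmf_of_set (S \<times> {..k})) = map_pmf (?F \<circ> \<beta>) (pmf_of_set (S \<times> {..k}))"
    using S H_eq by (intro map_pmf_cong) auto
  also have "\<dots> = map_pmf ?F (map_pmf \<beta> (pmf_of_set (S \<times> {..k})))"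
    by (simp add: pmf.map_comp)
  also have "map_pmf \<beta> (pmf_of_set (S \<times> {..k})) = pmf_of_set ({..k} \<times> S)"
    using S \<beta> by (simp add: map_pmf_of_set_inj bij_betw_def)
  finally show ?thesis
    unfolding pairs .
qed

lemma tendsto_floor_mult_divide:
  fixes y :: real
  shows "(\<lambda>n. real_of_int \<lfloor>real (Suc n) * y\<rfloor> / real (Suc n)) \<longlonglongrightarrow> y"
proof (rule tendsto_sandwich[of "\<lambda>n. y - 1 / real (Suc n)" _ _ "\<lambda>_. y"])
  have "(real (Suc n) * y - 1) / real (Suc n) \<le> real_of_int \<lfloor>real (Suc n) * y\<rfloor> / real (Suc n)"
    and "real_of_int \<lfloor>real (Suc n) * y\<rfloor> / real (Suc n) \<le> real (Suc n) * y / real (Suc n)" for n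
    by (intro divide_right_mono; linarith)+
  then show "\<forall>\<^sub>F n in sequentially. y - 1 / real (Suc n) \<le> real_of_int \<lfloor>real (Suc n) * y\<rfloor> / real (Suc n)"
    and "\<forall>\<^sub>F n in sequentially. real_of_int \<lfloor>real (Suc n) * y\<rfloor> / real (Suc n) \<le> y"
    by (simp_all add: diff_divide_distrib del: of_nat_Suc)
  show "(\<lambda>n. y - 1 / real (Suc n)) \<longlonglongrightarrow> y"
    using tendsto_diff[OF tendsto_const LIMSEQ_Suc[OF lim_inverse_n'], of y] by simp
qed simp

text \<open>A random function that is measurable at each fixed time and has continuous paths can be
  evaluated at a random time: approximate the time by the countably-valued
  \<open>\<lfloor>(n+1) Y\<rfloor> / (n+1)\<close>.\<close>
lemma borel_measurable_continuous_paths_compose: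
  fixes X :: "'a \<Rightarrow> real \<Rightarrow> real"
  assumes "\<And>t. (\<lambda>\<omega>. X \<omega> t) \<in> borel_measurable M"
    and "\<And>\<omega>. \<omega> \<in> space M \<Longrightarrow> continuous_on UNIV (X \<omega>)"
    and "Y \<in> borel_measurable M"
  shows "(\<lambda>\<omega>. X \<omega> (Y \<omega>)) \<in> borel_measurable M"
proof (rule borel_measurable_LIMSEQ_real)
  show "(\<lambda>\<omega>. X \<omega> (real_of_int \<lfloor>real (Suc n) * Y \<omega>\<rfloor> / real (Suc n))) \<in> borel_measurable M" for n
    using assms(1)
    by (rule measurable_compose_countable[where f="\<lambda>z \<omega>. X \<omega> (real_of_int z / real (Suc n))"])
      (use assms(3) in measurable)
  show "(\<lambda>n. X \<omega> (real_of_int \<lfloor>real (Suc n) * Y \<omega>\<rfloor> / real (Suc n))) \<longlonglongrightarrow> X \<omega> (Y \<omega>)"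
    if "\<omega> \<in> space M" for \<omega>
    using assms(2)[OF that] tendsto_floor_mult_divide
    by (auto intro: isCont_tendsto_compose simp: continuous_on_eq_continuous_at)
qed

lemma measurable_iter_BM:
  assumes "\<And>n. two_sided_BM M (B n)"
  shows "(\<lambda>\<omega>. iter_BM B n \<omega> t) \<in> borel_measurable M"
proof (induction n)
  case (Suc n)
  then show ?case
    using assms[of n]
    by (auto simp: two_sided_BM_def intro: borel_measurable_continuous_paths_compose)
qed simp

lemma measurable_component_any:
  "(\<lambda>x. x j) \<in> borel_measurable (Pi\<^sub>M I (\<lambda>_. borel :: real measure))"
proof (cases "j \<in> I")
  case False
  then have "(\<lambda>x. x j) \<in> borel_measurable (Pi\<^sub>M I (\<lambda>_. borel :: real measure)) \<longleftrightarrow>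
      (\<lambda>x. undefined :: real) \<in> borel_measurable (Pi\<^sub>M I (\<lambda>_. borel :: real measure))"
    by (intro measurable_cong) (auto simp: space_PiM)
  then show ?thesis by simp
qed simp

lemma measurable_component_random_index:
  fixes I :: "nat set"
  assumes "g \<in> M \<rightarrow>\<^sub>M Pi\<^sub>M I (\<lambda>_. borel :: real measure)" "n \<in> M \<rightarrow>\<^sub>M count_space UNIV"
  shows "(\<lambda>z. g z (n z)) \<in> borel_measurable M"
  using assms(2)
  by (rule measurable_compose_countable[where f="\<lambda>j z. g z j",
        OF measurable_compose[OF assms(1) measurable_component_any]])

lemma measurable_Gbar: "(\<lambda>g. Gbar g m) \<in> borel_measurable (Pi\<^sub>M I (\<lambda>_. borel))"
  unfolding Gbar_def by (intro borel_measurable_sum measurable_component_any)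

lemma measurable_Gbar_random_index:
  fixes I :: "nat set"
  assumes "g \<in> M \<rightarrow>\<^sub>M Pi\<^sub>M I (\<lambda>_. borel)" "n \<in> M \<rightarrow>\<^sub>M count_space UNIV"
  shows "(\<lambda>z. Gbar (g z) (n z)) \<in> borel_measurable M"
  using assms(2)
  by (rule measurable_compose_countable[where f="\<lambda>m z. Gbar (g z) m",
        OF measurable_compose[OF assms(1) measurable_Gbar]])

lemma measurable_sorted_rearr:
  assumes "i \<le> k"
  shows "(\<lambda>x. sorted_rearr k x i) \<in> borel_measurable (Pi\<^sub>M {..k} (\<lambda>_. borel))"
proof -
  let ?N = "Pi\<^sub>M {..k} (\<lambda>_. borel) :: (nat \<Rightarrow> real) measure"
  define E where "E p = {x \<in> space ?N. \<forall>j\<in>{..<k}. x (p j) \<le> x (p (Suc j))}" for p :: "nat \<Rightarrow> nat"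
  have E_sets: "E p \<in> sets ?N" for p
    unfolding E_def
    by (rule sets.sets_Collect_finite_All) (auto intro!: borel_measurable_le measurable_component_any)
  have cover: "space ?N \<subseteq> \<Union> (E ` {p. p permutes {..k}})"
  proof
    fix x assume x: "x \<in> space ?N"
    obtain p where p: "p permutes {..k}" "\<And>i. i \<le> k \<Longrightarrow> sorted_rearr k x i = x (p i)"
      using sorted_rearr_permutes[of k x] by blast
    have "x (p j) \<le> x (p (Suc j))" if "j < k" for j
      using p(2)[of j] p(2)[of "Suc j"] sorted_rearr_mono[of j "Suc j" k x] that by simp
    then show "x \<in> \<Union> (E ` {p. p permutes {..k}})"
      using x p(1) by (auto simp: E_def)
  qed
  have piece: "(\<lambda>x. sorted_rearr k x i) \<in> restrict_space ?N (E p) \<rightarrow>\<^sub>M borel" if p: "p permutes {..k}" for p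
  proof -
    have "(\<lambda>x. x (p i)) \<in> restrict_space ?N (E p) \<rightarrow>\<^sub>M borel"
      by (intro measurable_restrict_space1 measurable_component_any)
    moreover have "sorted_rearr k x i = x (p i)" if "x \<in> space (restrict_space ?N (E p))" for x
      using that p assms by (auto simp: E_def space_restrict_space intro: sorted_rearr_eq_of_sorted)
    ultimately show ?thesis
      by (simp cong: measurable_cong)
  qed
  have "countable (E ` {p. p permutes {..k}})"
    by (intro countable_image countable_finite finite_permutations) simp
  then show ?thesis
    by (rule measurable_piecewise_restrict[OF _ _ cover]) (use E_sets piece in auto)
qed

lemma measurable_gaps: "gaps k \<in> Pi\<^sub>M {..k} (\<lambda>_. borel) \<rightarrow>\<^sub>M Pi\<^sub>M {1..k} (\<lambda>_. borel)"
  unfolding gaps_def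
  by (intro measurable_restrict borel_measurable_diff measurable_sorted_rearr) auto

lemma measurable_recentred:
  fixes I :: "nat set"
  shows "(\<lambda>(x :: nat \<Rightarrow> real, u). \<lambda>i\<in>I. x i - x u) \<in> Pi\<^sub>M I (\<lambda>_. borel) \<Otimes>\<^sub>M measure_pmf p \<rightarrow>\<^sub>M Pi\<^sub>M I (\<lambda>_. borel)"
proof -
  have fst: "fst \<in> Pi\<^sub>M I (\<lambda>_. borel) \<Otimes>\<^sub>M measure_pmf p \<rightarrow>\<^sub>M Pi\<^sub>M I (\<lambda>_. borel)"
    by simp
  have snd: "snd \<in> Pi\<^sub>M I (\<lambda>_. borel) \<Otimes>\<^sub>M measure_pmf p \<rightarrow>\<^sub>M count_space UNIV"
    by (rule measurable_compose[OF measurable_snd, where g="\<lambda>u. u"]) simp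
  show ?thesis
    unfolding case_prod_beta
    by (intro measurable_restrict borel_measurable_diff
        measurable_compose[OF fst measurable_component_any] measurable_component_random_index[OF fst snd])
qed

lemma measurable_recentred_Gbar_shuffle:
  "(\<lambda>(g, u, \<tau>). \<lambda>i\<in>I. Gbar g (\<tau> i) - Gbar g u)
     \<in> Pi\<^sub>M J (\<lambda>_. borel) \<Otimes>\<^sub>M (measure_pmf p \<Otimes>\<^sub>M measure_pmf q) \<rightarrow>\<^sub>M Pi\<^sub>M I (\<lambda>_. borel)"
proof -
  have "(\<lambda>z. fst (snd z)) \<in> Pi\<^sub>M J (\<lambda>_. borel) \<Otimes>\<^sub>M (measure_pmf p \<Otimes>\<^sub>M measure_pmf q) \<rightarrow>\<^sub>M count_space UNIV"
    by (rule measurable_compose[OF measurable_snd, where g="\<lambda>w. fst w"]) simp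
  moreover have "(\<lambda>z. snd (snd z) i) \<in> Pi\<^sub>M J (\<lambda>_. borel) \<Otimes>\<^sub>M (measure_pmf p \<Otimes>\<^sub>M measure_pmf q) \<rightarrow>\<^sub>M count_space UNIV" for i
    by (rule measurable_compose[OF measurable_snd, where g="\<lambda>w. snd w i"],
        rule measurable_compose[OF measurable_snd, where g="\<lambda>\<tau>. \<tau> i"]) simp
  moreover have "fst \<in> Pi\<^sub>M J (\<lambda>_. borel) \<Otimes>\<^sub>M (measure_pmf p \<Otimes>\<^sub>M measure_pmf q) \<rightarrow>\<^sub>M Pi\<^sub>M J (\<lambda>_. borel)"
    by simp
  ultimately show ?thesis
    unfolding case_prod_beta
    by (intro measurable_restrict borel_measurable_diff measurable_Gbar_random_index)
qed

lemma sets_PiM_eq_sigma_orthants: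
  assumes "finite I"
  shows "sets (Pi\<^sub>M I (\<lambda>_. borel)) =
    sigma_sets (Pi\<^sub>E I (\<lambda>_. UNIV)) (range (\<lambda>a. Pi\<^sub>E I (\<lambda>i. {..a i :: real})))"
proof -
  let ?\<Omega> = "Pi\<^sub>E I (\<lambda>_. UNIV :: real set)"
  let ?E = "range (\<lambda>a. Pi\<^sub>E I (\<lambda>i. {..a i :: real}))"
  have E_eq: "?E = {{f \<in> ?\<Omega>. \<forall>i\<in>j. f i \<in> A i} | A j. j \<in> {I} \<and> A \<in> Pi j (\<lambda>_. range atMost)}"
  proof (intro equalityI subsetI)
    fix X assume "X \<in> ?E"
    then obtain a where "X = Pi\<^sub>E I (\<lambda>i. {..a i})"
      by blast
    then show "X \<in> {{f \<in> ?\<Omega>. \<forall>i\<in>j. f i \<in> A i} | A j. j \<in> {I} \<and> A \<in> Pi j (\<lambda>_. range atMost)}"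
      by (intro CollectI exI[of _ "\<lambda>i. {..a i}"] exI[of _ I]) (auto simp: PiE_iff extensional_def)
  next
    fix X assume "X \<in> {{f \<in> ?\<Omega>. \<forall>i\<in>j. f i \<in> A i} | A j. j \<in> {I} \<and> A \<in> Pi j (\<lambda>_. range atMost)}"
    then obtain A where A: "\<forall>i\<in>I. \<exists>a. A i = {..a}" and X: "X = {f \<in> ?\<Omega>. \<forall>i\<in>I. f i \<in> A i}"
      by (auto simp: Pi_iff image_iff)
    then obtain a where "\<forall>i\<in>I. A i = {..a i}"
      by metis
    then show "X \<in> ?E"
      by (intro image_eqI[of _ _ a]) (auto simp: X PiE_iff extensional_def)
  qed
  have "sets (Pi\<^sub>M I (\<lambda>_. borel :: real measure)) = sets (Pi\<^sub>M I (\<lambda>_. sigma UNIV (range (\<lambda>a::real. {..a}))))"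
    by (simp add: borel_eq_atMost[symmetric])
  also have "\<dots> = sets (sigma ?\<Omega> ?E)"
    unfolding E_eq
    by (rule sets_PiM_sigma)
      (use \<open>finite I\<close> in \<open>auto intro!: exI[of _ "range (\<lambda>n::nat. {..real n})"] simp: real_arch_simple\<close>)
  also have "\<dots> = sigma_sets ?\<Omega> ?E"
    by (rule sets_measure_of) (auto simp: PiE_iff)
  finally show ?thesis .
qed

lemma UN_PiE_atMost_real_of_nat:
  assumes "finite I"
  shows "(\<Union>n. Pi\<^sub>E I (\<lambda>_. {..real n})) = Pi\<^sub>E I (\<lambda>_. UNIV :: real set)"
proof (intro equalityI subsetI)
  fix x assume x: "x \<in> Pi\<^sub>E I (\<lambda>_. UNIV :: real set)"
  obtain n :: nat where "Max (insert 0 (x ` I)) \<le> real n"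
    using real_arch_simple by blast
  then have "\<forall>i\<in>I. x i \<le> real n"
    using \<open>finite I\<close> Max_ge[of "insert 0 (x ` I)"] by force
  then show "x \<in> (\<Union>n. Pi\<^sub>E I (\<lambda>_. {..real n}))"
    using x by (auto simp: PiE_iff)
qed (auto simp: PiE_iff)

lemma measure_eqI_PiM_orthants:
  fixes P Q :: "('i \<Rightarrow> real) measure"
  assumes "finite I"
    and sets_P: "sets P = sets (Pi\<^sub>M I (\<lambda>_. borel))" and sets_Q: "sets Q = sets (Pi\<^sub>M I (\<lambda>_. borel))"
    and "finite_measure P"
    and eq: "\<And>a. emeasure P (Pi\<^sub>E I (\<lambda>i. {..a i})) = emeasure Q (Pi\<^sub>E I (\<lambda>i. {..a i}))"
  shows "P = Q"
proof -
  let ?\<Omega> = "Pi\<^sub>E I (\<lambda>_. UNIV :: real set)"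
  let ?E = "range (\<lambda>a. Pi\<^sub>E I (\<lambda>i. {..a i :: real}))"
  show ?thesis
  proof (rule measure_eqI_generator_eq[where E="?E" and \<Omega>="?\<Omega>" and A="\<lambda>n. Pi\<^sub>E I (\<lambda>_. {..real n})"])
    show "Int_stable ?E"
    proof (rule Int_stableI_image)
      fix a b :: "'i \<Rightarrow> real"
      have "Pi\<^sub>E I (\<lambda>i. {..a i}) \<inter> Pi\<^sub>E I (\<lambda>i. {..b i}) = Pi\<^sub>E I (\<lambda>i. {..min (a i) (b i)})"
        by (auto simp: PiE_iff)
      then show "\<exists>c\<in>UNIV. Pi\<^sub>E I (\<lambda>i. {..a i}) \<inter> Pi\<^sub>E I (\<lambda>i. {..b i}) = Pi\<^sub>E I (\<lambda>i. {..c i})"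
        by (intro bexI[OF _ UNIV_I])
    qed
    show "?E \<subseteq> Pow ?\<Omega>"
      by (auto simp: PiE_iff)
    show "emeasure P X = emeasure Q X" if "X \<in> ?E" for X
      using that eq by blast
    show "sets P = sigma_sets ?\<Omega> ?E" "sets Q = sigma_sets ?\<Omega> ?E"
      using sets_P sets_Q sets_PiM_eq_sigma_orthants[OF \<open>finite I\<close>] by simp_all
    show "range (\<lambda>n. Pi\<^sub>E I (\<lambda>_. {..real n})) \<subseteq> ?E"
      using rangeI[of "\<lambda>a. Pi\<^sub>E I (\<lambda>i. {..a i})" "\<lambda>_. real n" for n] by auto
    show "(\<Union>n. Pi\<^sub>E I (\<lambda>_. {..real n})) = ?\<Omega>"
      by (rule UN_PiE_atMost_real_of_nat[OF \<open>finite I\<close>])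
    show "emeasure P (Pi\<^sub>E I (\<lambda>_. {..real n})) \<noteq> \<infinity>" for n
      using \<open>finite_measure P\<close> by (simp add: finite_measure.emeasure_finite)
  qed
qed

definition ramp :: "nat \<Rightarrow> real \<Rightarrow> real" where
  "ramp n y = max 0 (min 1 (1 - real (Suc n) * y))"

definition orthant_approx :: "'i set \<Rightarrow> ('i \<Rightarrow> real) \<Rightarrow> nat \<Rightarrow> ('i \<Rightarrow> real) \<Rightarrow> real" where
  "orthant_approx I a n x = (\<Prod>i\<in>I. ramp n (x i - a i))"

lemma ramp_bounds: "0 \<le> ramp n y" "ramp n y \<le> 1"
  unfolding ramp_def by auto

lemma continuous_on_ramp: "continuous_on S (ramp n)"
  unfolding ramp_def by (intro continuous_intros)

lemma tendsto_ramp: "(\<lambda>n. ramp n y) \<longlonglongrightarrow> (if y \<le> 0 then 1 else 0)"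
proof (cases "y \<le> 0")
  case True
  then have "ramp n y = 1" for n
    by (simp add: ramp_def mult_nonneg_nonpos)
  then show ?thesis
    using True by simp
next
  case False
  obtain N :: nat where "inverse y < real N"
    using reals_Archimedean2 by blast
  then have "1 < y * real N"
    using False by (simp add: field_simps)
  have "ramp n y = 0" if "N \<le> n" for n
  proof -
    have "y * real N \<le> y * real (Suc n)"
      using False that by (intro mult_left_mono) auto
    with \<open>1 < y * real N\<close> show ?thesis
      by (simp add: ramp_def mult.commute)
  qed
  then have "eventually (\<lambda>n. ramp n y = 0) sequentially"
    by (auto simp: eventually_sequentially)
  then show ?thesis
    using False by (simp add: tendsto_eventually)
qed

lemma orthant_approx_bounds: "0 \<le> orthant_approx I a n x" "orthant_approx I a n x \<le> 1"
  unfolding orthant_approx_def by (auto intro!: prod_nonneg prod_le_1 simp: ramp_bounds)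

lemma continuous_on_orthant_approx: "continuous_on S (orthant_approx I a n)"
  unfolding orthant_approx_def
  by (intro continuous_on_prod continuous_on_compose2[OF continuous_on_ramp] continuous_intros
      continuous_on_subset[OF continuous_on_product_coordinates]) auto

lemma bounded_orthant_approx: "bounded (orthant_approx I a n ` S)"
  by (intro boundedI[of _ 1]) (auto simp: abs_of_nonneg orthant_approx_bounds)

lemma measurable_orthant_approx:
  "orthant_approx I a n \<in> borel_measurable (Pi\<^sub>M I (\<lambda>_. borel))"
  unfolding orthant_approx_def
  by (intro borel_measurable_prod measurable_compose[OF _ borel_measurable_continuous_onI[OF continuous_on_ramp]]
      borel_measurable_diff measurable_component_singleton) auto

lemma tendsto_orthant_approx:
  assumes "finite I" "x \<in> Pi\<^sub>E I (\<lambda>_. UNIV)"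
  shows "(\<lambda>n. orthant_approx I a n x) \<longlonglongrightarrow> indicator (Pi\<^sub>E I (\<lambda>i. {..a i})) x"
proof -
  have "(\<lambda>n. orthant_approx I a n x) \<longlonglongrightarrow> (\<Prod>i\<in>I. if x i - a i \<le> 0 then 1 else 0)"
    unfolding orthant_approx_def by (intro tendsto_prod tendsto_ramp)
  also have "(\<Prod>i\<in>I. if x i - a i \<le> 0 then 1 else 0 :: real) = indicator (Pi\<^sub>E I (\<lambda>i. {..a i})) x"
    using assms by (auto simp: indicator_def PiE_iff)
  finally show ?thesis .
qed

lemma tendsto_integral_orthant_approx:
  assumes "finite I" "finite_measure P" and sets_P: "sets P = sets (Pi\<^sub>M I (\<lambda>_. borel))"
  shows "(\<lambda>n. \<integral>x. orthant_approx I a n x \<partial>P) \<longlonglongrightarrow> measure P (Pi\<^sub>E I (\<lambda>i. {..a i}))"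
proof -
  interpret finite_measure P by fact
  have orthant: "Pi\<^sub>E I (\<lambda>i. {..a i}) \<in> sets P"
    unfolding sets_P using \<open>finite I\<close> by (intro sets_PiM_I_finite) auto
  have "(\<lambda>n. \<integral>x. orthant_approx I a n x \<partial>P) \<longlonglongrightarrow> (\<integral>x. indicator (Pi\<^sub>E I (\<lambda>i. {..a i})) x \<partial>P)"
  proof (rule integral_dominated_convergence[where w="\<lambda>_. 1"])
    show "orthant_approx I a n \<in> borel_measurable P" for n
      using measurable_orthant_approx by (simp add: measurable_cong_sets[OF sets_P refl])
    show "AE x in P. (\<lambda>n. orthant_approx I a n x) \<longlonglongrightarrow> indicator (Pi\<^sub>E I (\<lambda>i. {..a i})) x"
      using sets_eq_imp_space_eq[OF sets_P] \<open>finite I\<close>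
      by (intro AE_I2 tendsto_orthant_approx) (auto simp: space_PiM)
    show "AE x in P. norm (orthant_approx I a n x) \<le> 1" for n
      by (intro AE_I2) (simp add: abs_of_nonneg orthant_approx_bounds)
  qed (use orthant in auto)
  then show ?thesis
    using orthant by simp
qed

lemma measure_eqI_orthant_approx:
  fixes P Q :: "('i \<Rightarrow> real) measure"
  assumes "finite I" "finite_measure P" "finite_measure Q"
    and sets_P: "sets P = sets (Pi\<^sub>M I (\<lambda>_. borel))" and sets_Q: "sets Q = sets (Pi\<^sub>M I (\<lambda>_. borel))"
    and eq: "\<And>a n. (\<integral>x. orthant_approx I a n x \<partial>P) = (\<integral>x. orthant_approx I a n x \<partial>Q)"
  shows "P = Q"
proof (rule measure_eqI_PiM_orthants[OF \<open>finite I\<close> sets_P sets_Q \<open>finite_measure P\<close>])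
  fix a
  have "measure P (Pi\<^sub>E I (\<lambda>i. {..a i})) = measure Q (Pi\<^sub>E I (\<lambda>i. {..a i}))"
    using tendsto_integral_orthant_approx[OF assms(1,2) sets_P, of a]
      tendsto_integral_orthant_approx[OF assms(1,3) sets_Q, of a]
    by (simp add: eq LIMSEQ_unique)
  then show "emeasure P (Pi\<^sub>E I (\<lambda>i. {..a i})) = emeasure Q (Pi\<^sub>E I (\<lambda>i. {..a i}))"
    using assms(2,3) by (simp add: finite_measure.emeasure_eq_measure)
qed

lemma is_mu_tendsto_integral:
  fixes f :: "(nat \<Rightarrow> real) \<Rightarrow> real"
  assumes "is_mu M B m \<mu>" "inj_on t {..<m}" "\<And>i. i < m \<Longrightarrow> t i \<noteq> 0"
    and "continuous_on (Pi\<^sub>E {..<m} (\<lambda>_. UNIV)) f" "bounded (f ` Pi\<^sub>E {..<m} (\<lambda>_. UNIV))"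
  shows "(\<lambda>n. \<integral>x. f x \<partial>distr M (Pi\<^sub>M {..<m} (\<lambda>_. borel)) (\<lambda>\<omega>. \<lambda>i\<in>{..<m}. iter_BM B n \<omega> (t i)))
           \<longlonglongrightarrow> (\<integral>x. f x \<partial>\<mu>)"
  by (rule conv_in_distr_def[THEN iffD1, rule_format, OF _ assms(4,5)])
    (use assms(1-3) in \<open>simp add: is_mu_def\<close>)

lemma continuous_on_permute_coordinates: "continuous_on S (\<lambda>x. \<lambda>i\<in>I. x (\<pi> i))"
proof (intro continuous_on_coordinatewise_then_product)
  fix i
  show "continuous_on S (\<lambda>x. (\<lambda>i\<in>I. x (\<pi> i)) i)"
    by (cases "i \<in> I") (auto intro: continuous_on_subset[OF continuous_on_product_coordinates])
qed

lemma measurable_permute_coordinates: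
  assumes "\<pi> ` I \<subseteq> I"
  shows "(\<lambda>x. \<lambda>i\<in>I. x (\<pi> i)) \<in> Pi\<^sub>M I (\<lambda>_. N) \<rightarrow>\<^sub>M Pi\<^sub>M I (\<lambda>_. N)"
  using assms by (intro measurable_restrict measurable_component_singleton) auto

lemma is_mu_integral_permute_coordinates:
  fixes \<mu> :: "(nat \<Rightarrow> real) measure" and f :: "(nat \<Rightarrow> real) \<Rightarrow> real"
  assumes BM: "\<And>n. two_sided_BM M (B n)" and mu: "is_mu M B m \<mu>" and \<pi>: "\<pi> permutes {..<m}"
    and f_cont: "continuous_on (Pi\<^sub>E {..<m} (\<lambda>_. UNIV)) f"
    and f_bdd: "bounded (f ` Pi\<^sub>E {..<m} (\<lambda>_. UNIV))"
    and f_meas: "f \<in> borel_measurable (Pi\<^sub>M {..<m} (\<lambda>_. borel))"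
  shows "(\<integral>x. f (\<lambda>i\<in>{..<m}. x (\<pi> i)) \<partial>\<mu>) = (\<integral>x. f x \<partial>\<mu>)"
proof -
  let ?K = "{..<m}"
  let ?N = "Pi\<^sub>M ?K (\<lambda>_. borel) :: (nat \<Rightarrow> real) measure"
  let ?\<rho> = "\<lambda>x :: nat \<Rightarrow> real. \<lambda>i\<in>?K. x (\<pi> i)"
  define vec where "vec t n = (\<lambda>\<omega>. \<lambda>i\<in>?K. iter_BM B n \<omega> (t i))" for t :: "nat \<Rightarrow> real" and n
  define t where "t i = real (Suc i)" for i
  have \<rho>_meas: "?\<rho> \<in> ?N \<rightarrow>\<^sub>M ?N"
    using permutes_image[OF \<pi>] by (intro measurable_permute_coordinates) simp
  have vec_meas: "vec t n \<in> M \<rightarrow>\<^sub>M ?N" for t n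
    unfolding vec_def using BM by (intro measurable_restrict measurable_iter_BM)
  have t_inj: "inj_on t ?K" "inj_on (t \<circ> \<pi>) ?K"
    using permutes_inj_on[OF \<pi>] permutes_image[OF \<pi>]
    by (auto simp: t_def inj_on_def)
  have f\<rho>_cont: "continuous_on (Pi\<^sub>E ?K (\<lambda>_. UNIV)) (\<lambda>x. f (?\<rho> x))"
    by (rule continuous_on_compose2[OF f_cont continuous_on_permute_coordinates]) auto
  have f\<rho>_bdd: "bounded ((\<lambda>x. f (?\<rho> x)) ` Pi\<^sub>E ?K (\<lambda>_. UNIV))"
    by (rule bounded_subset[OF f_bdd]) auto
  have lim_\<rho>: "(\<lambda>n. \<integral>x. f (?\<rho> x) \<partial>distr M ?N (vec t n)) \<longlonglongrightarrow> (\<integral>x. f (?\<rho> x) \<partial>\<mu>)"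
    unfolding vec_def
    by (rule is_mu_tendsto_integral[OF mu t_inj(1) _ f\<rho>_cont f\<rho>_bdd]) (simp add: t_def)
  have "distr M ?N (vec (t \<circ> \<pi>) n) = distr (distr M ?N (vec t n)) ?N ?\<rho>" for n
  proof -
    have "vec (t \<circ> \<pi>) n = ?\<rho> \<circ> vec t n"
      using permutes_in_image[OF \<pi>] by (auto simp: vec_def fun_eq_iff)
    then show ?thesis
      by (simp add: distr_distr[OF \<rho>_meas vec_meas])
  qed
  then have "(\<integral>x. f x \<partial>distr M ?N (vec (t \<circ> \<pi>) n)) = (\<integral>x. f (?\<rho> x) \<partial>distr M ?N (vec t n))" for n
    using \<rho>_meas f_meas by (simp add: integral_distr)
  moreover have "(\<lambda>n. \<integral>x. f x \<partial>distr M ?N (vec (t \<circ> \<pi>) n)) \<longlonglongrightarrow> (\<integral>x. f x \<partial>\<mu>)"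
    unfolding vec_def by (rule is_mu_tendsto_integral[OF mu t_inj(2) _ f_cont f_bdd]) (simp add: t_def)
  ultimately show ?thesis
    using lim_\<rho> LIMSEQ_unique by simp
qed

theorem is_mu_permutation_invariant:
  fixes \<mu> :: "(nat \<Rightarrow> real) measure"
  assumes BM: "\<And>n. two_sided_BM M (B n)" and mu: "is_mu M B m \<mu>" and \<pi>: "\<pi> permutes {..<m}"
  shows "distr \<mu> (Pi\<^sub>M {..<m} (\<lambda>_. borel)) (\<lambda>x. \<lambda>i\<in>{..<m}. x (\<pi> i)) = \<mu>"
proof -
  let ?N = "Pi\<^sub>M {..<m} (\<lambda>_. borel) :: (nat \<Rightarrow> real) measure"
  let ?\<rho> = "\<lambda>x :: nat \<Rightarrow> real. \<lambda>i\<in>{..<m}. x (\<pi> i)"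
  have sets_\<mu>: "sets \<mu> = sets ?N" and prob_\<mu>: "prob_space \<mu>"
    using mu by (auto simp: is_mu_def)
  interpret prob_space \<mu>
    by (fact prob_\<mu>)
  have \<rho>_meas: "?\<rho> \<in> \<mu> \<rightarrow>\<^sub>M ?N"
    using permutes_image[OF \<pi>] measurable_permute_coordinates[of \<pi> "{..<m}" borel]
    by (simp add: measurable_cong_sets[OF sets_\<mu> refl])
  show ?thesis
  proof (rule measure_eqI_orthant_approx[of "{..<m}"])
    show "finite_measure (distr \<mu> ?N ?\<rho>)"
      using prob_space_distr[OF \<rho>_meas] by (simp add: prob_space_def)
    show "(\<integral>x. orthant_approx {..<m} a n x \<partial>distr \<mu> ?N ?\<rho>) = (\<integral>x. orthant_approx {..<m} a n x \<partial>\<mu>)"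
      for a n
      using \<rho>_meas
      by (simp add: integral_distr measurable_orthant_approx continuous_on_orthant_approx
          bounded_orthant_approx is_mu_integral_permute_coordinates[OF BM mu \<pi>])
  qed (use sets_\<mu> finite_measure_axioms in auto)
qed

lemma emeasure_distr_pair_measure:
  assumes "sigma_finite_measure N" "f \<in> M \<Otimes>\<^sub>M N \<rightarrow>\<^sub>M K" "A \<in> sets K"
  shows "emeasure (distr (M \<Otimes>\<^sub>M N) K f) A = (\<integral>\<^sup>+x. \<integral>\<^sup>+y. indicator A (f (x, y)) \<partial>N \<partial>M)"
proof -
  have "emeasure (distr (M \<Otimes>\<^sub>M N) K f) A = (\<integral>\<^sup>+z. indicator A (f z) \<partial>(M \<Otimes>\<^sub>M N))"
    using assms(2,3) by (simp add: nn_integral_distr[symmetric])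
  also have "\<dots> = (\<integral>\<^sup>+x. \<integral>\<^sup>+y. indicator A (f (x, y)) \<partial>N \<partial>M)"
    by (rule sigma_finite_measure.nn_integral_fst[symmetric, OF assms(1)])
      (rule measurable_compose[OF assms(2) borel_measurable_indicator[OF assms(3)]])
  finally show ?thesis .
qed

lemma nn_integral_pair_measure_pmf:
  assumes "f \<in> borel_measurable (measure_pmf p \<Otimes>\<^sub>M measure_pmf q)"
  shows "(\<integral>\<^sup>+w. f w \<partial>(measure_pmf p \<Otimes>\<^sub>M measure_pmf q)) = (\<integral>\<^sup>+w. f w \<partial>pair_pmf p q)"
  using assms
  by (simp add: nn_integral_pair_pmf' sigma_finite_measure.nn_integral_fst[symmetric]
      prob_space_imp_sigma_finite prob_space_measure_pmf)

lemma nn_integral_indicator_map_pmf: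
  "(\<integral>\<^sup>+w. indicator A (f w) \<partial>measure_pmf p) = emeasure (map_pmf f p) A"
  by (subst nn_integral_indicator[symmetric]) simp_all

lemma nn_integral_invariant_pmf_average:
  assumes fin: "finite (set_pmf q)"
    and \<phi>_meas: "\<And>\<pi>. \<pi> \<in> set_pmf q \<Longrightarrow> \<phi> \<pi> \<in> M \<rightarrow>\<^sub>M N"
    and \<phi>_inv: "\<And>\<pi>. \<pi> \<in> set_pmf q \<Longrightarrow> distr M N (\<phi> \<pi>) = M"
    and h: "h \<in> borel_measurable M"
  shows "(\<integral>\<^sup>+x. h x \<partial>M) = (\<integral>\<^sup>+x. \<integral>\<^sup>+\<pi>. h (\<phi> \<pi> x) \<partial>q \<partial>M)"
proof -
  have h_N: "h \<in> borel_measurable N" if "\<pi> \<in> set_pmf q" for \<pi>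
    using h arg_cong[OF \<phi>_inv[OF that], of sets] by (simp cong: measurable_cong_sets)
  have h_\<phi>: "(\<integral>\<^sup>+x. h (\<phi> \<pi> x) \<partial>M) = (\<integral>\<^sup>+x. h x \<partial>M)" if "\<pi> \<in> set_pmf q" for \<pi>
    using nn_integral_distr[OF \<phi>_meas[OF that], of h] h h_N[OF that] \<phi>_inv[OF that] by simp
  have "(\<integral>\<^sup>+x. \<integral>\<^sup>+\<pi>. h (\<phi> \<pi> x) \<partial>q \<partial>M) = (\<integral>\<^sup>+x. (\<Sum>\<pi>\<in>set_pmf q. h (\<phi> \<pi> x) * pmf q \<pi>) \<partial>M)"
    using fin by (simp add: nn_integral_measure_pmf_finite)
  also have "\<dots> = (\<Sum>\<pi>\<in>set_pmf q. (\<integral>\<^sup>+x. h (\<phi> \<pi> x) \<partial>M) * pmf q \<pi>)"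
  proof -
    have "(\<lambda>x. h (\<phi> \<pi> x)) \<in> borel_measurable M" if "\<pi> \<in> set_pmf q" for \<pi>
      by (rule measurable_compose[OF \<phi>_meas[OF that] h_N[OF that]])
    then show ?thesis
      by (simp add: nn_integral_sum nn_integral_multc)
  qed
  also have "\<dots> = (\<integral>\<^sup>+x. h x \<partial>M)"
    using fin h_\<phi> by (simp add: sum_distrib_left[symmetric] sum_ennreal sum_pmf_eq_1)
  finally show ?thesis ..
qed

lemma emeasure_distr_gamma_shuffle:
  fixes \<mu> :: "(nat \<Rightarrow> real) measure"
  assumes sets_\<mu>: "sets \<mu> = sets (Pi\<^sub>M {..k} (\<lambda>_. borel))" and A: "A \<in> sets (Pi\<^sub>M {..k} (\<lambda>_. borel))"
  shows "emeasure (distr (gamma k \<mu> \<Otimes>\<^sub>M (measure_pmf p \<Otimes>\<^sub>M measure_pmf q)) (Pi\<^sub>M {..k} (\<lambda>_. borel))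
            (\<lambda>(g, u, \<tau>). \<lambda>i\<in>{..k}. Gbar g (\<tau> i) - Gbar g u)) A
       = (\<integral>\<^sup>+x. emeasure (map_pmf (\<lambda>(u, \<tau>). \<lambda>i\<in>{..k}. Gbar (gaps k x) (\<tau> i) - Gbar (gaps k x) u)
            (pair_pmf p q)) A \<partial>\<mu>)"
proof -
  let ?G = "Pi\<^sub>M {1..k} (\<lambda>_. borel) :: (nat \<Rightarrow> real) measure"
  let ?W = "measure_pmf p \<Otimes>\<^sub>M measure_pmf q"
  let ?F = "\<lambda>(g, u, \<tau>). \<lambda>i\<in>{..k}. Gbar g (\<tau> i) - Gbar g u"
  have W: "sigma_finite_measure ?W"
    by (intro prob_space_imp_sigma_finite prob_space_pair prob_space_measure_pmf)
  have F: "?F \<in> ?G \<Otimes>\<^sub>M ?W \<rightarrow>\<^sub>M Pi\<^sub>M {..k} (\<lambda>_. borel)"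
    by (rule measurable_recentred_Gbar_shuffle)
  have sets_gamma: "sets (gamma k \<mu>) = sets ?G"
    by (simp add: gamma_def)
  have gaps: "gaps k \<in> \<mu> \<rightarrow>\<^sub>M ?G"
    using measurable_gaps by (simp add: measurable_cong_sets[OF sets_\<mu> refl])
  have "emeasure (distr (gamma k \<mu> \<Otimes>\<^sub>M ?W) (Pi\<^sub>M {..k} (\<lambda>_. borel)) ?F) A
      = (\<integral>\<^sup>+g. \<integral>\<^sup>+w. indicator A (?F (g, w)) \<partial>?W \<partial>gamma k \<mu>)"
    using F A W
    by (intro emeasure_distr_pair_measure)
      (simp_all add: measurable_cong_sets[OF sets_pair_measure_cong[OF sets_gamma refl] refl])
  also have "\<dots> = (\<integral>\<^sup>+x. \<integral>\<^sup>+w. indicator A (?F (gaps k x, w)) \<partial>?W \<partial>\<mu>)"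
  proof -
    have "(\<lambda>g. \<integral>\<^sup>+w. indicator A (?F (g, w)) \<partial>?W) \<in> borel_measurable ?G"
      by (rule sigma_finite_measure.borel_measurable_nn_integral_fst[OF W
            measurable_compose[OF F borel_measurable_indicator[OF A]]])
    then show ?thesis
      unfolding gamma_def by (subst nn_integral_distr[OF gaps]) simp_all
  qed
  also have "\<dots> = (\<integral>\<^sup>+x. emeasure (map_pmf (\<lambda>w. ?F (gaps k x, w)) (pair_pmf p q)) A \<partial>\<mu>)"
  proof (rule nn_integral_cong)
    fix x assume "x \<in> space \<mu>"
    then have "gaps k x \<in> space ?G"
      using measurable_space[OF gaps] by blast
    then have "(\<lambda>w. indicator A (?F (gaps k x, w)) :: ennreal) \<in> borel_measurable ?W"
      by (intro measurable_Pair2[OF measurable_compose[OF F borel_measurable_indicator[OF A]]])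
    then show "(\<integral>\<^sup>+w. indicator A (?F (gaps k x, w)) \<partial>?W) = emeasure (map_pmf (\<lambda>w. ?F (gaps k x, w)) (pair_pmf p q)) A"
      by (simp add: nn_integral_pair_measure_pmf nn_integral_indicator_map_pmf)
  qed
  finally show ?thesis
    by (simp add: case_prod_beta')
qed

lemma emeasure_distr_recentred:
  fixes \<mu> :: "(nat \<Rightarrow> real) measure"
  assumes BM: "\<And>n. two_sided_BM M (B n)" and mu: "is_mu M B (Suc k) \<mu>"
    and A: "A \<in> sets (Pi\<^sub>M {..k} (\<lambda>_. borel))"
  shows "emeasure (distr (\<mu> \<Otimes>\<^sub>M measure_pmf (pmf_of_set {..k})) (Pi\<^sub>M {..k} (\<lambda>_. borel))
            (\<lambda>(x, u). \<lambda>i\<in>{..k}. x i - x u)) A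
       = (\<integral>\<^sup>+x. emeasure (map_pmf (\<lambda>(\<pi>, u). \<lambda>i\<in>{..k}. x (\<pi> i) - x (\<pi> u))
            (pair_pmf (pmf_of_set {p. p permutes {..k}}) (pmf_of_set {..k}))) A \<partial>\<mu>)"
proof -
  let ?N = "Pi\<^sub>M {..k} (\<lambda>_. borel) :: (nat \<Rightarrow> real) measure"
  let ?U = "pmf_of_set {..k}"
  let ?T = "pmf_of_set {p. p permutes {..k}}"
  let ?H = "\<lambda>(x :: nat \<Rightarrow> real, u). \<lambda>i\<in>{..k}. x i - x u"
  define \<rho> where "\<rho> = (\<lambda>(\<pi> :: nat \<Rightarrow> nat) (x :: nat \<Rightarrow> real). \<lambda>i\<in>{..k}. x (\<pi> i))"
  define h where "h x = (\<integral>\<^sup>+u. indicator A (?H (x, u)) \<partial>?U)" for x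
  have U: "sigma_finite_measure (measure_pmf ?U)"
    by (intro prob_space_imp_sigma_finite prob_space_measure_pmf)
  have S: "finite {p. p permutes {..k}}" "{p. p permutes {..k}} \<noteq> {}"
    using finite_permutations[of "{..k}"] permutes_id[of "{..k}"] by blast+
  have sets_\<mu>: "sets \<mu> = sets ?N"
    using mu by (simp add: is_mu_def lessThan_Suc_atMost)
  have H: "?H \<in> \<mu> \<Otimes>\<^sub>M ?U \<rightarrow>\<^sub>M ?N"
    using measurable_recentred[of "{..k}" ?U]
    by (simp add: measurable_cong_sets[OF sets_pair_measure_cong[OF sets_\<mu> refl] refl])
  have \<rho>: "\<rho> \<pi> \<in> \<mu> \<rightarrow>\<^sub>M ?N" if "\<pi> permutes {..k}" for \<pi>
    using measurable_permute_coordinates[of \<pi> "{..k}" borel] permutes_image[OF that]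
    by (simp add: \<rho>_def measurable_cong_sets[OF sets_\<mu> refl])
  have \<rho>_inv: "distr \<mu> ?N (\<rho> \<pi>) = \<mu>" if "\<pi> permutes {..k}" for \<pi>
    using is_mu_permutation_invariant[OF BM mu, of \<pi>] that by (simp add: \<rho>_def lessThan_Suc_atMost)
  have "emeasure (distr (\<mu> \<Otimes>\<^sub>M ?U) ?N ?H) A = (\<integral>\<^sup>+x. h x \<partial>\<mu>)"
    unfolding h_def by (rule emeasure_distr_pair_measure[OF U H A])
  also have "\<dots> = (\<integral>\<^sup>+x. \<integral>\<^sup>+\<pi>. h (\<rho> \<pi> x) \<partial>?T \<partial>\<mu>)"
    using S \<rho> \<rho>_inv unfolding h_def
    by (intro nn_integral_invariant_pmf_average sigma_finite_measure.borel_measurable_nn_integral_fst[OF U]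
        measurable_compose[OF H borel_measurable_indicator[OF A]]) auto
  also have "\<dots> = (\<integral>\<^sup>+x. emeasure (map_pmf (\<lambda>(\<pi>, u). \<lambda>i\<in>{..k}. x (\<pi> i) - x (\<pi> u)) (pair_pmf ?T ?U)) A \<partial>\<mu>)"
  proof (rule nn_integral_cong)
    fix x :: "nat \<Rightarrow> real"
    have "?H (\<rho> \<pi> x, u) = (\<lambda>i\<in>{..k}. x (\<pi> i) - x (\<pi> u))" if "u \<le> k" for \<pi> u
      using that by (auto simp: \<rho>_def)
    then have "(\<integral>\<^sup>+\<pi>. h (\<rho> \<pi> x) \<partial>?T)
        = (\<integral>\<^sup>+w. indicator A ((\<lambda>(\<pi>, u). \<lambda>i\<in>{..k}. x (\<pi> i) - x (\<pi> u)) w) \<partial>pair_pmf ?T ?U)"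
      unfolding nn_integral_pair_pmf' h_def
      by (intro nn_integral_cong nn_integral_cong_AE) (simp add: AE_measure_pmf_iff)
    then show "(\<integral>\<^sup>+\<pi>. h (\<rho> \<pi> x) \<partial>?T) = emeasure (map_pmf (\<lambda>(\<pi>, u). \<lambda>i\<in>{..k}. x (\<pi> i) - x (\<pi> u)) (pair_pmf ?T ?U)) A"
      by (simp only: nn_integral_indicator_map_pmf)
  qed
  finally show ?thesis .
qed

theorem proposition4:
  fixes M :: "'a measure" and B :: "nat \<Rightarrow> 'a \<Rightarrow> real \<Rightarrow> real"
    and \<mu> :: "(nat \<Rightarrow> real) measure" and k :: nat
  assumes "iid_two_sided_BMs M B"
    and "is_mu M B (Suc k) \<mu>"
    and "k \<ge> 1"
  shows "distr (gamma k \<mu> \<Otimes>\<^sub>M (measure_pmf (pmf_of_set {..k}) \<Otimes>\<^sub>M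
                 measure_pmf (pmf_of_set {p. p permutes {..k}})))
            (Pi\<^sub>M {..k} (\<lambda>_. borel))
            (\<lambda>(g, u, \<tau>). \<lambda>i\<in>{..k}. Gbar g (\<tau> i) - Gbar g u)
       = distr (\<mu> \<Otimes>\<^sub>M measure_pmf (pmf_of_set {..k}))
            (Pi\<^sub>M {..k} (\<lambda>_. borel))
            (\<lambda>(x, u). \<lambda>i\<in>{..k}. x i - x u)"
    (is "?L = ?R")
proof (rule measure_eqI)
  have BM: "\<And>n. two_sided_BM M (B n)"
    using assms(1) by (simp add: iid_two_sided_BMs_def)
  have sets_\<mu>: "sets \<mu> = sets (Pi\<^sub>M {..k} (\<lambda>_. borel))"
    using assms(2) by (simp add: is_mu_def lessThan_Suc_atMost)
  show "sets ?L = sets ?R"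
    by simp
  fix A assume "A \<in> sets ?L"
  then have A: "A \<in> sets (Pi\<^sub>M {..k} (\<lambda>_. borel))"
    by simp
  show "emeasure ?L A = emeasure ?R A"
    unfolding emeasure_distr_gamma_shuffle[OF sets_\<mu> A] emeasure_distr_recentred[OF BM assms(2) A]
      map_pmf_recentred_shuffle_eq_Gbar_gaps ..
qed

end
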